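(* In the setting below: (i) $C_0$ is a unital $K$-subalgebra of $C$ with identity element $w=\sum_{e\in G_0}\big(\sum_{f\in G_0}1_f\#\sum_{h\in T_f\cap S_e}v_h\big)\delta_e$. (ii) The elements $w_e:=\big(\sum_{f\in G_0}1_f\#\sum_{h\in T_f\cap S_e}v_h\big)\delta_e$, $e\in G_0$, are central orthogonal idempotents of $C_0$ whose sum is $w$. (iii) $C_0=\bigoplus_{e\in G_0}C_e$, where $C_e:=C_0w_e=\bigoplus_{g\in G_e}\Big(\bigoplus_{l,k:\ r(l)=d(l)=r(k),\ d(k)=e}A_l\#v_k\Big)\delta_g$ is an ideal of $C_0$ which is a unital algebra with identity $w_e$.
   Context: Groupoid conventions. A groupoid is a small category with all morphisms invertible, regarded as the set $G$ of morphisms. For $g\in G$ we have $d(g)=g^{-1}g$ and $r(g)=gg^{-1}$. The product $gh$ is defined iff $d(g)=r(h)$, and then $d(gh)=d(h)$, $r(gh)=r(g)$. $G^2=\{(g,h):d(g)=r(h)\}$, and $G_0$ is the set of identities. For $e\in G_0$: - $G_e=\{g:d(g)=r(g)=e\}$; - $S_e=\{g: d(g)=e\}$; - $T_e=\{g: r(g)=e\}$. Actions. An action of $G$ on a ring $R$ is a pair $\beta=(\{E_g\},\{\beta_g\})$ where each $E_g=E_{r(g)}$ is an ideal of $R$, each $\beta_g:E_{g^{-1}}\to E_g$ is a ring isomorphism, $\beta_e=\mathrm{id}$ for $e\in G_0$, and $\beta_g\beta_h=\beta_{gh}$ on $E_{h^{-1}}$ for $(g,h)\in G^2$. The skew groupoid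 ring is $R\star_\beta G=\bigoplus_g E_g\delta_g$ with $(x\delta_g)(y\delta_h)=x\beta_g(y)\delta_{gh}$ if $(g,h)\in G^2$ and $0$ otherwise. $KG^*$. The free $K$-module with basis $\{v_g\}$, with $v_gv_h=\delta_{g,h}v_g$. Setting. $K$ is a commutative unital ring and $G$ is a finite groupoid. $A=\bigoplus_{g\in G}A_g$ is a unital $G$-graded $K$-algebra ($A_gA_h\subseteq A_{gh}$ if $(g,h)\in G^2$, and $0$ otherwise). Known facts: $1_A=\sum_{e\in G_0}1_e$ with $1_e\in A_e$ an identity element of $A_e$ (possibly $0$), and $1_ea=a$ for $a\in A_g$ with $r(g)=e$, $a1_e=a$ for $a\in A_g$ with $d(g)=e$. $KG^*$ acts on $A$ by $v_h\cdot a=a_h$ (the $h$-component). $B=A\#KG^*=A\otimes_K KG^*$ with $(a\#v_g)(b\#v_h)=a(v_{gh^{-1}}\cdot b)\#v_h$ if $d(g)=d(h)$, and $0$ otherwise. $G$ acts on $B$ by $\beta=(\{E_g\},\{\beta_g\})$ with $E_g=\bigoplus_{l,k\in G,\ d(k)=r(g)}A_l\#v_k$ and $\beta_g(a_l\#v_k)=a_l\#v_{kg^{-1}}$. Let $C=B\star_\beta G$, and $$C_0=\bigoplus_{e\in G_0}\bigoplus_{g\in G_e}\Big(\bigoplus_{l,k\in G:\ r(l)=d(l)=r(k),\ d(k)=e}A_l\#v_k\Big)\delta_g.$$ *)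

theory Defs
  imports Complex_Main "HOL-Library.Function_Algebras"
begin

text \<open>A groupoid is a set G of morphisms with a partial product pr (only meaningful
  when d g = r h) and an inversion iv; d g = g^{-1} g, r g = g g^{-1}.\<close>

definition gd :: "('g \<Rightarrow> 'g \<Rightarrow> 'g) \<Rightarrow> ('g \<Rightarrow> 'g) \<Rightarrow> 'g \<Rightarrow> 'g" where
  "gd pr iv g = pr (iv g) g"

definition gr :: "('g \<Rightarrow> 'g \<Rightarrow> 'g) \<Rightarrow> ('g \<Rightarrow> 'g) \<Rightarrow> 'g \<Rightarrow> 'g" where
  "gr pr iv g = pr g (iv g)"

definition groupoid :: "'g set \<Rightarrow> ('g \<Rightarrow> 'g \<Rightarrow> 'g) \<Rightarrow> ('g \<Rightarrow> 'g) \<Rightarrow> bool" where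
  "groupoid G pr iv \<longleftrightarrow>
     (\<forall>g\<in>G. iv g \<in> G) \<and>
     (\<forall>g\<in>G. gd pr iv (iv g) = gr pr iv g \<and> gr pr iv (iv g) = gd pr iv g) \<and>
     (\<forall>g\<in>G. \<forall>h\<in>G. gd pr iv g = gr pr iv h \<longrightarrow>
        pr g h \<in> G \<and> gd pr iv (pr g h) = gd pr iv h \<and> gr pr iv (pr g h) = gr pr iv g) \<and>
     (\<forall>g\<in>G. \<forall>h\<in>G. \<forall>k\<in>G. gd pr iv g = gr pr iv h \<and> gd pr iv h = gr pr iv k \<longrightarrow>
        pr (pr g h) k = pr g (pr h k)) \<and>
     (\<forall>g\<in>G. pr (gr pr iv g) g = g \<and> pr g (gd pr iv g) = g)"

definition G0 :: "'g set \<Rightarrow> ('g \<Rightarrow> 'g \<Rightarrow> 'g) \<Rightarrow> ('g \<Rightarrow> 'g) \<Rightarrow> 'g set" where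
  "G0 G pr iv = gd pr iv ` G"

definition K_algebra :: "('k::comm_ring_1 \<Rightarrow> 'a::ring_1 \<Rightarrow> 'a) \<Rightarrow> bool" where
  "K_algebra scale \<longleftrightarrow> module scale \<and>
     (\<forall>t a b. scale t (a * b) = scale t a * b \<and> scale t (a * b) = a * scale t b)"

definition graded_algebra ::
  "('k::comm_ring_1 \<Rightarrow> 'a::ring_1 \<Rightarrow> 'a) \<Rightarrow> 'g set \<Rightarrow> ('g \<Rightarrow> 'g \<Rightarrow> 'g) \<Rightarrow> ('g \<Rightarrow> 'g)
     \<Rightarrow> ('g \<Rightarrow> 'a set) \<Rightarrow> bool" where
  "graded_algebra scale G pr iv Ag \<longleftrightarrow>
     (\<forall>g\<in>G. module.subspace scale (Ag g)) \<and>
     (\<forall>a. \<exists>!x. (\<forall>g. g \<notin> G \<longrightarrow> x g = 0) \<and> (\<forall>g\<in>G. x g \<in> Ag g) \<and> a = (\<Sum>g\<in>G. x g)) \<and>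
     (\<forall>g\<in>G. \<forall>h\<in>G. \<forall>a\<in>Ag g. \<forall>b\<in>Ag h.
        (gd pr iv g = gr pr iv h \<longrightarrow> a * b \<in> Ag (pr g h)) \<and>
        (gd pr iv g \<noteq> gr pr iv h \<longrightarrow> a * b = 0))"

text \<open>The homogeneous component a_h = v_h . a.\<close>
definition gcomp :: "'g set \<Rightarrow> ('g \<Rightarrow> 'a::ring_1 set) \<Rightarrow> 'g \<Rightarrow> 'a \<Rightarrow> 'a" where
  "gcomp G Ag h a =
     (THE x. (\<forall>g. g \<notin> G \<longrightarrow> x g = 0) \<and> (\<forall>g\<in>G. x g \<in> Ag g) \<and> a = (\<Sum>g\<in>G. x g)) h"

text \<open>Since KG^* is free on {v_k : k in G} (G finite), an element sum_k a_k # v_k of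
  B = A (x)_K KG^* is represented by the function k \<mapsto> a_k (zero outside G).
  An element sum_g b_g delta_g of C is represented by g \<mapsto> b_g, i.e. by
  c :: 'g \<Rightarrow> 'g \<Rightarrow> 'a with c g k the A-coefficient of (_ # v_k) delta_g.\<close>

definition B_mult :: "'g set \<Rightarrow> ('g \<Rightarrow> 'g \<Rightarrow> 'g) \<Rightarrow> ('g \<Rightarrow> 'g) \<Rightarrow> ('g \<Rightarrow> 'a::ring_1 set)
    \<Rightarrow> ('g \<Rightarrow> 'a) \<Rightarrow> ('g \<Rightarrow> 'a) \<Rightarrow> ('g \<Rightarrow> 'a)" where
  "B_mult G pr iv Ag x y = (\<lambda>h. if h \<in> G then
      (\<Sum>g\<in>{g\<in>G. gd pr iv g = gd pr iv h}. x g * gcomp G Ag (pr g (iv h)) (y h)) else 0)"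

text \<open>beta_g (a # v_k) = a # v_{k g^{-1}}, on E_{g^{-1}}.\<close>
definition beta :: "'g set \<Rightarrow> ('g \<Rightarrow> 'g \<Rightarrow> 'g) \<Rightarrow> ('g \<Rightarrow> 'g) \<Rightarrow> 'g \<Rightarrow> ('g \<Rightarrow> 'a::zero) \<Rightarrow> ('g \<Rightarrow> 'a)" where
  "beta G pr iv g y = (\<lambda>k. if k \<in> G \<and> gd pr iv k = gr pr iv g then y (pr k g) else 0)"

definition Cset :: "'g set \<Rightarrow> ('g \<Rightarrow> 'g \<Rightarrow> 'g) \<Rightarrow> ('g \<Rightarrow> 'g) \<Rightarrow> ('g \<Rightarrow> 'g \<Rightarrow> 'a::zero) set" where
  "Cset G pr iv = {c. \<forall>g k. c g k \<noteq> 0 \<longrightarrow> g \<in> G \<and> k \<in> G \<and> gd pr iv k = gr pr iv g}"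

text \<open>(x delta_g)(y delta_h) = x beta_g(y) delta_{gh} if d g = r h, 0 otherwise.\<close>
definition C_mult :: "'g set \<Rightarrow> ('g \<Rightarrow> 'g \<Rightarrow> 'g) \<Rightarrow> ('g \<Rightarrow> 'g) \<Rightarrow> ('g \<Rightarrow> 'a::ring_1 set)
    \<Rightarrow> ('g \<Rightarrow> 'g \<Rightarrow> 'a) \<Rightarrow> ('g \<Rightarrow> 'g \<Rightarrow> 'a) \<Rightarrow> ('g \<Rightarrow> 'g \<Rightarrow> 'a)" where
  "C_mult G pr iv Ag c c' = (\<lambda>m.
     \<Sum>(g, h)\<in>{(g, h). g \<in> G \<and> h \<in> G \<and> gd pr iv g = gr pr iv h \<and> pr g h = m}.
        B_mult G pr iv Ag (c g) (beta G pr iv g (c' h)))"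

definition C_scale :: "('k \<Rightarrow> 'a \<Rightarrow> 'a) \<Rightarrow> 'k \<Rightarrow> ('g \<Rightarrow> 'g \<Rightarrow> 'a) \<Rightarrow> ('g \<Rightarrow> 'g \<Rightarrow> 'a)" where
  "C_scale scale t c = (\<lambda>g k. scale t (c g k))"

text \<open>C_0 = (+)_{e in G_0} (+)_{g in G_e} ((+)_{l,k: r l = d l = r k, d k = e} A_l # v_k) delta_g.\<close>
definition C0set :: "'g set \<Rightarrow> ('g \<Rightarrow> 'g \<Rightarrow> 'g) \<Rightarrow> ('g \<Rightarrow> 'g) \<Rightarrow> ('g \<Rightarrow> 'a::ring_1 set)
    \<Rightarrow> ('g \<Rightarrow> 'g \<Rightarrow> 'a) set" where
  "C0set G pr iv Ag = {c.
     (\<forall>g k. c g k \<noteq> 0 \<longrightarrow> g \<in> G \<and> gd pr iv g = gr pr iv g \<and> k \<in> G \<and> gd pr iv k = gd pr iv g) \<and>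
     (\<forall>g k l. l \<in> G \<and> gcomp G Ag l (c g k) \<noteq> 0 \<longrightarrow>
        gr pr iv l = gd pr iv l \<and> gd pr iv l = gr pr iv k)}"

definition Ce_explicit :: "'g set \<Rightarrow> ('g \<Rightarrow> 'g \<Rightarrow> 'g) \<Rightarrow> ('g \<Rightarrow> 'g) \<Rightarrow> ('g \<Rightarrow> 'a::ring_1 set)
    \<Rightarrow> 'g \<Rightarrow> ('g \<Rightarrow> 'g \<Rightarrow> 'a) set" where
  "Ce_explicit G pr iv Ag e = {c.
     (\<forall>g k. c g k \<noteq> 0 \<longrightarrow> g \<in> G \<and> gd pr iv g = e \<and> gr pr iv g = e \<and> k \<in> G \<and> gd pr iv k = e) \<and>
     (\<forall>g k l. l \<in> G \<and> gcomp G Ag l (c g k) \<noteq> 0 \<longrightarrow>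
        gr pr iv l = gd pr iv l \<and> gd pr iv l = gr pr iv k)}"

definition one_at :: "'g set \<Rightarrow> ('g \<Rightarrow> 'a::ring_1 set) \<Rightarrow> 'g \<Rightarrow> 'a" where
  "one_at G Ag f = gcomp G Ag f 1"

definition w_e :: "'g set \<Rightarrow> ('g \<Rightarrow> 'g \<Rightarrow> 'g) \<Rightarrow> ('g \<Rightarrow> 'g) \<Rightarrow> ('g \<Rightarrow> 'a::ring_1 set)
    \<Rightarrow> 'g \<Rightarrow> ('g \<Rightarrow> 'g \<Rightarrow> 'a)" where
  "w_e G pr iv Ag e = (\<lambda>g k. if g = e \<and> k \<in> G then
      (\<Sum>f\<in>G0 G pr iv. if gr pr iv k = f \<and> gd pr iv k = e then one_at G Ag f else 0) else 0)"

definition w_tot :: "'g set \<Rightarrow> ('g \<Rightarrow> 'g \<Rightarrow> 'g) \<Rightarrow> ('g \<Rightarrow> 'g) \<Rightarrow> ('g \<Rightarrow> 'a::ring_1 set)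
    \<Rightarrow> ('g \<Rightarrow> 'g \<Rightarrow> 'a)" where
  "w_tot G pr iv Ag = (\<Sum>e\<in>G0 G pr iv. w_e G pr iv Ag e)"

definition Ce :: "'g set \<Rightarrow> ('g \<Rightarrow> 'g \<Rightarrow> 'g) \<Rightarrow> ('g \<Rightarrow> 'g) \<Rightarrow> ('g \<Rightarrow> 'a::ring_1 set)
    \<Rightarrow> 'g \<Rightarrow> ('g \<Rightarrow> 'g \<Rightarrow> 'a) set" where
  "Ce G pr iv Ag e = (\<lambda>c. C_mult G pr iv Ag c (w_e G pr iv Ag e)) ` C0set G pr iv Ag"

end

theory Submission
  imports Defs
begin

text \<open>
  Everything is derived from one computation.  For a set S of identities put
  U S = sum_{e in S} w_e, i.e. the element whose delta_e-coefficient (e in S) is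
  sum_k 1_{r k} # v_k over the k with d k = e.  Using only that the local units 1_f
  of the grading act as identities on homogeneous components (1_{r h} a = a = a 1_{d h}
  for a in A_h), we show that multiplying an element c of C_0 by U S on either side
  simply discards the delta_g-coefficients of c with d g not in S.  Taking S = G_0, S = {e}
  and S = {e'} gives at once that w = U G_0 is the identity of C_0, that the w_e are
  central orthogonal idempotents, and that C_0 w_e consists of the elements of C_0
  supported on the isotropy group G_e.  The remaining ingredient is closure of C_0 under
  multiplication, which rests on the fact that elements of A supported on the isotropy
  group G_f form a subring.
\<close>

lemma sum_fun_apply: "(sum f A) x = sum (\<lambda>a. f a x) A"
  by (induct A rule: infinite_finite_induct) auto

lemma sum_eq_single:
  assumes "finite A" "\<And>x. x \<in> A \<Longrightarrow> x \<noteq> a \<Longrightarrow> f x = 0"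
  shows "sum f A = (if a \<in> A then f a else 0)"
  using assms by (cases "a \<in> A") (auto simp: sum.remove intro: sum.neutral)

section \<open>Groupoid identities\<close>

locale groupoid_laws =
  fixes G :: "'g set" and pr :: "'g \<Rightarrow> 'g \<Rightarrow> 'g" and iv :: "'g \<Rightarrow> 'g"
  assumes groupoid: "groupoid G pr iv"
begin

abbreviation "d \<equiv> gd pr iv"
abbreviation "r \<equiv> gr pr iv"

lemma iv_in: "g \<in> G \<Longrightarrow> iv g \<in> G"
  and d_iv: "g \<in> G \<Longrightarrow> d (iv g) = r g"
  and r_iv: "g \<in> G \<Longrightarrow> r (iv g) = d g"
  and mult: "g \<in> G \<Longrightarrow> h \<in> G \<Longrightarrow> d g = r h \<Longrightarrow> pr g h \<in> G \<and> d (pr g h) = d h \<and> r (pr g h) = r g"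
  and assoc: "g \<in> G \<Longrightarrow> h \<in> G \<Longrightarrow> k \<in> G \<Longrightarrow> d g = r h \<Longrightarrow> d h = r k \<Longrightarrow>
      pr (pr g h) k = pr g (pr h k)"
  and unit_l: "g \<in> G \<Longrightarrow> pr (r g) g = g"
  and unit_r: "g \<in> G \<Longrightarrow> pr g (d g) = g"
  using groupoid unfolding groupoid_def by blast+

lemma d_eq: "pr (iv g) g = d g" and r_eq: "pr g (iv g) = r g"
  by (simp_all add: gd_def gr_def)

lemma d_in: "g \<in> G \<Longrightarrow> d g \<in> G"
  and d_d: "g \<in> G \<Longrightarrow> d (d g) = d g"
  and r_d: "g \<in> G \<Longrightarrow> r (d g) = d g"
  using mult[of "iv g" g] iv_in d_iv r_iv d_eq by metis+

lemma r_in: "g \<in> G \<Longrightarrow> r g \<in> G"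
  and d_r: "g \<in> G \<Longrightarrow> d (r g) = r g"
  and r_r: "g \<in> G \<Longrightarrow> r (r g) = r g"
  using mult[of g "iv g"] iv_in d_iv r_iv r_eq by metis+

lemma right_div:
  assumes "g' \<in> G" "k \<in> G" "d g' = d k"
  shows "pr g' (iv k) \<in> G \<and> d (pr g' (iv k)) = r k \<and> r (pr g' (iv k)) = r g'
    \<and> pr (pr g' (iv k)) k = g'"
proof -
  have comp: "d g' = r (iv k)" and dk: "d (iv k) = r k" using assms r_iv d_iv by simp_all
  have "pr (pr g' (iv k)) k = pr g' (pr (iv k) k)"
    using assoc[OF assms(1) iv_in[OF assms(2)] assms(2) comp] dk by simp
  also have "\<dots> = g'" using d_eq assms unit_r by metis
  finally show ?thesis using mult[OF assms(1) iv_in[OF assms(2)] comp] dk by simp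
qed

lemma mult_right_div: assumes "l \<in> G" "k \<in> G" "d l = r k" shows "pr (pr l k) (iv k) = l"
proof -
  have "pr (pr l k) (iv k) = pr l (pr k (iv k))"
    using assoc[OF assms(1,2) iv_in[OF assms(2)] assms(3)] r_iv[OF assms(2)] by simp
  also have "\<dots> = l" using r_eq assms unit_r by metis
  finally show ?thesis .
qed

lemma cancel_l:
  assumes "g \<in> G" "h \<in> G" "h' \<in> G" "d g = r h" "d g = r h'" "pr g h = pr g h'"
  shows "h = h'"
  using assoc[of "iv g" g h] assoc[of "iv g" g h'] assms iv_in d_iv d_eq unit_l by metis

lemma cancel_r:
  assumes "g \<in> G" "g' \<in> G" "h \<in> G" "d g = r h" "d g' = r h" "pr g h = pr g' h"
  shows "g = g'"
  using mult_right_div[of g h] mult_right_div[of g' h] assms by metis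

lemma G0_iff: "e \<in> G0 G pr iv \<longleftrightarrow> e \<in> G \<and> d e = e"
  unfolding G0_def using d_in d_d by auto (metis image_eqI)

lemma G0_r: "e \<in> G0 G pr iv \<Longrightarrow> r e = e"
  using G0_iff r_d by metis

end

section \<open>Homogeneous components and local units of A\<close>

locale graded_setting = groupoid_laws G pr iv for G :: "'g set" and pr iv +
  fixes Ag :: "'g \<Rightarrow> 'a::ring_1 set" and scale :: "'k::comm_ring_1 \<Rightarrow> 'a \<Rightarrow> 'a"
  assumes finite_G: "finite G" and K_alg: "K_algebra scale"
    and graded: "graded_algebra scale G pr iv Ag"
begin

abbreviation "gc \<equiv> gcomp G Ag"
abbreviation "one \<equiv> one_at G Ag"

lemma module: "module scale"
  using K_alg unfolding K_algebra_def by blast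

lemma Ag_0: "g \<in> G \<Longrightarrow> 0 \<in> Ag g"
  and Ag_add: "g \<in> G \<Longrightarrow> x \<in> Ag g \<Longrightarrow> y \<in> Ag g \<Longrightarrow> x + y \<in> Ag g"
  and Ag_neg: "g \<in> G \<Longrightarrow> x \<in> Ag g \<Longrightarrow> - x \<in> Ag g"
  and Ag_scale: "g \<in> G \<Longrightarrow> x \<in> Ag g \<Longrightarrow> scale t x \<in> Ag g"
  using graded module.subspace_0[OF module] module.subspace_add[OF module]
    module.subspace_neg[OF module] module.subspace_scale[OF module]
  unfolding graded_algebra_def by blast+

lemma Ag_mult: "g \<in> G \<Longrightarrow> h \<in> G \<Longrightarrow> a \<in> Ag g \<Longrightarrow> b \<in> Ag h \<Longrightarrow> d g = r h \<Longrightarrow> a * b \<in> Ag (pr g h)"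
  and Ag_mult_0: "g \<in> G \<Longrightarrow> h \<in> G \<Longrightarrow> a \<in> Ag g \<Longrightarrow> b \<in> Ag h \<Longrightarrow> d g \<noteq> r h \<Longrightarrow> a * b = 0"
  using graded unfolding graded_algebra_def by blast+

lemma mult_homog: "g \<in> G \<Longrightarrow> h \<in> G \<Longrightarrow> a \<in> Ag g \<Longrightarrow> b \<in> Ag h \<Longrightarrow>
   a * b = 0 \<or> (pr g h \<in> G \<and> a * b \<in> Ag (pr g h))"
  using Ag_mult Ag_mult_0 mult by blast

definition decomp :: "'a \<Rightarrow> ('g \<Rightarrow> 'a) \<Rightarrow> bool" where
  "decomp a x \<longleftrightarrow> (\<forall>g. g \<notin> G \<longrightarrow> x g = 0) \<and> (\<forall>g\<in>G. x g \<in> Ag g) \<and> a = (\<Sum>g\<in>G. x g)"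

lemma decomp_unique: "\<exists>!x. decomp a x"
  using graded unfolding graded_algebra_def decomp_def by blast

lemma decomp_gc: "decomp a (\<lambda>h. gc h a)"
  using theI'[OF decomp_unique[of a]] unfolding gcomp_def decomp_def by simp

lemma gc_out: "g \<notin> G \<Longrightarrow> gc g a = 0"
  and gc_in: "g \<in> G \<Longrightarrow> gc g a \<in> Ag g"
  and gc_sum: "a = (\<Sum>g\<in>G. gc g a)"
  using decomp_gc unfolding decomp_def by blast+

lemma gc_eqI: "decomp a x \<Longrightarrow> gc h a = x h"
  using decomp_unique[of a] decomp_gc by metis

lemma gc_homog: assumes "h \<in> G" "a \<in> Ag h" shows "gc g a = (if g = h then a else 0)"
  by (rule gc_eqI) (use assms Ag_0 finite_G in \<open>auto simp: decomp_def sum.delta'\<close>)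

lemma gc_zero [simp]: "gc g 0 = 0"
  by (rule gc_eqI) (auto simp: decomp_def Ag_0)

lemma gc_add: "gc g (a + b) = gc g a + gc g b"
  by (rule gc_eqI) (use gc_out gc_in Ag_add gc_sum[of a] gc_sum[of b] in \<open>auto simp: decomp_def sum.distrib\<close>)

lemma gc_neg: "gc g (- a) = - gc g a"
  by (rule gc_eqI) (use gc_out gc_in Ag_neg gc_sum[of a] in \<open>auto simp: decomp_def sum_negf\<close>)

lemma gc_scale: "gc g (scale t a) = scale t (gc g a)"
proof (rule gc_eqI)
  show "decomp (scale t a) (\<lambda>g. scale t (gc g a))"
    unfolding decomp_def using gc_out gc_in Ag_scale gc_sum[of a]
      module.scale_zero_right[OF module] module.scale_sum_right[OF module] by metis
qed

lemma gc_sum_distrib: "gc g (sum f I) = (\<Sum>i\<in>I. gc g (f i))"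
  by (induct I rule: infinite_finite_induct) (auto simp: gc_add)

lemma gc_sum_homog:
  assumes "finite I" "\<And>i. i \<in> I \<Longrightarrow> b i = 0 \<or> (\<phi> i \<in> G \<and> b i \<in> Ag (\<phi> i))"
  shows "gc m (sum b I) = (\<Sum>i\<in>I. if \<phi> i = m then b i else 0)"
  unfolding gc_sum_distrib using assms(2) gc_homog by (intro sum.cong) fastforce+

lemma one_sum: "1 = (\<Sum>g\<in>G. one g)"
  and one_in: "g \<in> G \<Longrightarrow> one g \<in> Ag g"
  unfolding one_at_def using gc_sum gc_in by blast+

text \<open>1_{r h} is a left unit on A_h: compare h-components of a = 1 a.\<close>
lemma one_left: assumes h: "h \<in> G" "a \<in> Ag h" shows "one (r h) * a = a"
proof -
  have "a = gc h (\<Sum>g\<in>G. one g * a)"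
    using gc_homog h by (simp flip: sum_distrib_right one_sum)
  also have "\<dots> = (\<Sum>g\<in>G. if pr g h = h then one g * a else 0)"
    by (rule gc_sum_homog[OF finite_G]) (use mult_homog one_in h in blast)
  also have "\<dots> = (\<Sum>g\<in>G. if g = r h then one g * a else 0)"
  proof (rule sum.cong[OF refl])
    fix g assume g: "g \<in> G"
    show "(if pr g h = h then one g * a else 0) = (if g = r h then one g * a else 0)"
    proof (cases "d g = r h")
      case True
      then have "pr g h = h \<longleftrightarrow> g = r h"
        using cancel_r[of g "r h" h] g h unit_l r_in d_r by auto
      then show ?thesis by simp
    next
      case False
      then show ?thesis using Ag_mult_0[OF g h(1) one_in[OF g] h(2)] d_r[OF h(1)] by auto
    qed
  qed
  also have "\<dots> = one (r h) * a" using r_in[OF h(1)] finite_G by (simp add: sum.delta')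
  finally show ?thesis ..
qed

lemma one_right: assumes h: "h \<in> G" "a \<in> Ag h" shows "a * one (d h) = a"
proof -
  have "a = gc h (\<Sum>g\<in>G. a * one g)"
    using gc_homog h by (simp flip: sum_distrib_left one_sum)
  also have "\<dots> = (\<Sum>g\<in>G. if pr h g = h then a * one g else 0)"
    by (rule gc_sum_homog[OF finite_G]) (use mult_homog one_in h in blast)
  also have "\<dots> = (\<Sum>g\<in>G. if g = d h then a * one g else 0)"
  proof (rule sum.cong[OF refl])
    fix g assume g: "g \<in> G"
    show "(if pr h g = h then a * one g else 0) = (if g = d h then a * one g else 0)"
    proof (cases "d h = r g")
      case True
      then have "pr h g = h \<longleftrightarrow> g = d h"
        using cancel_l[of h g "d h"] g h unit_r[OF h(1)] d_in[OF h(1)] r_d[OF h(1)] by auto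
      then show ?thesis by simp
    next
      case False
      then show ?thesis using Ag_mult_0[OF h(1) g h(2) one_in[OF g]] r_d[OF h(1)] by auto
    qed
  qed
  also have "\<dots> = a * one (d h)" using d_in[OF h(1)] finite_G by (simp add: sum.delta')
  finally show ?thesis ..
qed

end

section \<open>Supports of elements of A\<close>

context graded_setting begin

definition supported :: "('g \<Rightarrow> bool) \<Rightarrow> 'a \<Rightarrow> bool" where
  "supported P a \<longleftrightarrow> (\<forall>l\<in>G. gc l a \<noteq> 0 \<longrightarrow> P l)"

lemma supported_mono: "supported P a \<Longrightarrow> (\<And>l. l \<in> G \<Longrightarrow> P l \<Longrightarrow> Q l) \<Longrightarrow> supported Q a"
  unfolding supported_def by auto

lemma supported_expand:
  assumes "supported P a" shows "a = (\<Sum>l\<in>{l\<in>G. P l}. gc l a)"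
proof -
  have "(\<Sum>l\<in>G. gc l a) = (\<Sum>l\<in>{l\<in>G. P l}. gc l a)"
    by (rule sum.mono_neutral_right[OF finite_G]) (use assms in \<open>auto simp: supported_def\<close>)
  then show ?thesis using gc_sum[of a] by simp
qed

lemma supported_zero [simp]: "supported P 0"
  and supported_add: "supported P a \<Longrightarrow> supported P b \<Longrightarrow> supported P (a + b)"
  and supported_neg: "supported P a \<Longrightarrow> supported P (- a)"
  and supported_scale: "supported P a \<Longrightarrow> supported P (scale t a)"
  unfolding supported_def gc_add gc_neg gc_scale using module.scale_zero_right[OF module] by auto

lemma supported_sum: "(\<And>i. i \<in> I \<Longrightarrow> supported P (f i)) \<Longrightarrow> supported P (sum f I)"
  by (induct I rule: infinite_finite_induct) (auto simp: supported_add)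

lemma supported_homog: "h \<in> G \<Longrightarrow> b \<in> Ag h \<Longrightarrow> P h \<Longrightarrow> supported P b"
  unfolding supported_def using gc_homog by auto

lemma supported_gc: assumes "supported P b" shows "supported P (gc l b)"
proof (cases "gc l b = 0")
  case False
  then have "l \<in> G" "P l" using assms gc_out unfolding supported_def by metis+
  then show ?thesis using supported_homog gc_in by blast
qed simp

definition isotropic :: "'g \<Rightarrow> 'g \<Rightarrow> bool" where
  "isotropic f l \<longleftrightarrow> l \<in> G \<and> r l = f \<and> d l = f"

lemma supported_mult_isotropic:
  assumes a: "supported (isotropic f) a" and b: "supported (isotropic f) b"
  shows "supported (isotropic f) (a * b)"
proof -
  have "a * b = (\<Sum>l1\<in>G. \<Sum>l2\<in>G. gc l1 a * gc l2 b)"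
    by (subst gc_sum[of a], subst gc_sum[of b]) (rule sum_product)
  moreover have "supported (isotropic f) (gc l1 a * gc l2 b)" if l: "l1 \<in> G" "l2 \<in> G" for l1 l2
  proof (cases "gc l1 a = 0 \<or> gc l2 b = 0")
    case False
    then have "isotropic f l1" "isotropic f l2" using a b l unfolding supported_def by auto
    then have "d l1 = r l2" and iso: "isotropic f (pr l1 l2)"
      using mult[OF l] unfolding isotropic_def by auto
    then have "pr l1 l2 \<in> G" "gc l1 a * gc l2 b \<in> Ag (pr l1 l2)"
      using Ag_mult[OF l gc_in[OF l(1)] gc_in[OF l(2)]] unfolding isotropic_def by blast+
    then show ?thesis using supported_homog iso by blast
  qed auto
  ultimately show ?thesis by (simp add: supported_sum)
qed

lemma supported_one_right: assumes "supported (\<lambda>l. d l = f) a" shows "a * one f = a"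
proof -
  have "a * one f = (\<Sum>l\<in>{l\<in>G. d l = f}. gc l a * one f)"
    by (subst supported_expand[OF assms]) (rule sum_distrib_right)
  also have "\<dots> = (\<Sum>l\<in>{l\<in>G. d l = f}. gc l a)"
    by (rule sum.cong[OF refl]) (use one_right gc_in in auto)
  finally show ?thesis using supported_expand[OF assms] by simp
qed

end

section \<open>The units U S of C and the restriction law\<close>

context graded_setting begin

abbreviation "C0 \<equiv> C0set G pr iv Ag"
abbreviation "mul \<equiv> C_mult G pr iv Ag"
abbreviation "Bmul \<equiv> B_mult G pr iv Ag"
abbreviation "bt \<equiv> beta G pr iv"
abbreviation "E0 \<equiv> G0 G pr iv"
abbreviation "we \<equiv> w_e G pr iv Ag"

lemma finite_E0: "finite E0"
  using finite_G unfolding G0_def by simp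

lemma C0_iff: "c \<in> C0 \<longleftrightarrow> (\<forall>g k. c g k \<noteq> 0 \<longrightarrow> g \<in> G \<and> d g = r g \<and> k \<in> G \<and> d k = d g)
   \<and> (\<forall>g k. supported (isotropic (r k)) (c g k))"
  unfolding C0set_def supported_def isotropic_def by auto

lemma C0_nonzero: "c \<in> C0 \<Longrightarrow> c g k \<noteq> 0 \<Longrightarrow> g \<in> G \<and> d g = r g \<and> k \<in> G \<and> d k = d g"
  and C0_supported: "c \<in> C0 \<Longrightarrow> supported (isotropic (r k)) (c g k)"
  unfolding C0_iff by blast+

definition Bunit :: "'g \<Rightarrow> 'g \<Rightarrow> 'a" where
  "Bunit f = (\<lambda>k. if k \<in> G \<and> d k = f then one (r k) else 0)"

definition U :: "'g set \<Rightarrow> 'g \<Rightarrow> 'g \<Rightarrow> 'a" where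
  "U S = (\<lambda>g. if g \<in> S then Bunit g else (\<lambda>k. 0))"

definition restr :: "'g set \<Rightarrow> ('g \<Rightarrow> 'g \<Rightarrow> 'a) \<Rightarrow> 'g \<Rightarrow> 'g \<Rightarrow> 'a" where
  "restr S c = (\<lambda>m k. if d m \<in> S then c m k else 0)"

lemma we_eq: "w_e G pr iv Ag e = U {e}"
proof (intro ext)
  fix g k
  have "(\<Sum>f\<in>E0. if r k = f \<and> d k = e then one f else 0) = (if d k = e then one (r k) else 0)"
    if "k \<in> G"
  proof -
    have "r k \<in> E0" using that G0_iff r_in d_r by simp
    then show ?thesis using finite_E0 by (cases "d k = e") simp_all
  qed
  then show "w_e G pr iv Ag e g k = U {e} g k" unfolding w_e_def U_def Bunit_def by auto
qed

lemma w_eq: "w_tot G pr iv Ag = U E0"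
proof (intro ext)
  fix g k
  have "w_tot G pr iv Ag g k = (\<Sum>e\<in>E0. if e = g then U {g} g k else 0)"
    unfolding w_tot_def we_eq sum_fun_apply by (intro sum.cong) (auto simp: U_def)
  also have "\<dots> = U E0 g k" using finite_E0 by (simp add: U_def)
  finally show "w_tot G pr iv Ag g k = U E0 g k" .
qed

text \<open>U S lies in C_0: its coefficients 1_{r k} are homogeneous of isotropic degree r k.\<close>
lemma U_C0: assumes "S \<subseteq> E0" shows "U S \<in> C0"
proof -
  have one_supported: "supported (isotropic (r k)) (one (r k))" if "k \<in> G" for k
    using that by (intro supported_homog[OF r_in one_in[OF r_in]])
      (auto simp: isotropic_def d_r r_r r_in)
  have "g \<in> G \<and> d g = r g \<and> k \<in> G \<and> d k = d g" if "U S g k \<noteq> 0" for g k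
  proof -
    have "g \<in> S" "k \<in> G" "d k = g" using that by (auto simp: U_def Bunit_def split: if_splits)
    then show ?thesis using assms G0_iff[of g] G0_r[of g] by auto
  qed
  moreover have "supported (isotropic (r k)) (U S g k)" for g k
    using one_supported by (simp add: U_def Bunit_def)
  ultimately show ?thesis unfolding C0_iff by blast
qed

lemma U_empty: "U {} = 0"
  by (simp add: U_def fun_eq_iff)

lemma restr_U: "T \<subseteq> E0 \<Longrightarrow> restr S (U T) = U (S \<inter> T)"
  unfolding restr_def U_def Bunit_def using G0_iff by (fastforce simp: fun_eq_iff)

lemma restr_C0: "c \<in> C0 \<Longrightarrow> restr S c \<in> C0"
  unfolding C0_iff restr_def by auto

lemma restr_E0: "c \<in> C0 \<Longrightarrow> restr E0 c = c"
  unfolding restr_def using C0_nonzero G0_iff d_in d_d by (fastforce simp: fun_eq_iff)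

lemma sum_restr: assumes "c \<in> C0" shows "(\<Sum>e\<in>E0. restr {e} c) = c"
proof (intro ext)
  fix g k
  have "(\<Sum>e\<in>E0. restr {e} c) g k = (\<Sum>e\<in>E0. if e = d g then c g k else 0)"
    unfolding sum_fun_apply restr_def by (intro sum.cong) auto
  also have "\<dots> = c g k"
    using C0_nonzero[OF assms, of g k] finite_E0 G0_iff d_in d_d by auto
  finally show "(\<Sum>e\<in>E0. restr {e} c) g k = c g k" .
qed

definition Pairs :: "'g \<Rightarrow> ('g \<times> 'g) set" where
  "Pairs m = {(g, h). g \<in> G \<and> h \<in> G \<and> d g = r h \<and> pr g h = m}"

lemma finite_Pairs: "finite (Pairs m)"
  by (rule finite_subset[of _ "G \<times> G"]) (auto simp: Pairs_def finite_G)

lemma mul_apply: "mul x y m k = (\<Sum>p\<in>Pairs m. Bmul (x (fst p)) (bt (fst p) (y (snd p))) k)"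
  unfolding C_mult_def Pairs_def sum_fun_apply by (simp add: case_prod_beta)

lemma Bmul_apply: "Bmul x y k = (if k \<in> G then
      (\<Sum>g\<in>{g\<in>G. d g = d k}. x g * gc (pr g (iv k)) (y k)) else 0)"
  unfolding B_mult_def by simp

lemma Bmul_Bunit_left:
  assumes k: "k \<in> G" and y: "supported (\<lambda>l. d l = r k) (y k)"
  shows "Bmul (Bunit (d k)) y k = y k"
proof -
  have "Bmul (Bunit (d k)) y k = (\<Sum>g'\<in>{g'\<in>G. d g' = d k}. one (r g') * gc (pr g' (iv k)) (y k))"
    unfolding Bmul_apply Bunit_def using k by (auto intro: sum.cong)
  also have "\<dots> = (\<Sum>l\<in>{l\<in>G. d l = r k}. one (r l) * gc l (y k))"
  proof (rule sum.reindex_bij_witness[where i="\<lambda>l. pr l k" and j="\<lambda>g'. pr g' (iv k)"])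
    fix g' assume "g' \<in> {g'\<in>G. d g' = d k}"
    then have "pr g' (iv k) \<in> G \<and> d (pr g' (iv k)) = r k \<and> r (pr g' (iv k)) = r g'
        \<and> pr (pr g' (iv k)) k = g'" using right_div k by blast
    then show "pr (pr g' (iv k)) k = g'" "pr g' (iv k) \<in> {l\<in>G. d l = r k}"
      "one (r (pr g' (iv k))) * gc (pr g' (iv k)) (y k) = one (r g') * gc (pr g' (iv k)) (y k)"
      by auto
  next
    fix l assume "l \<in> {l\<in>G. d l = r k}"
    then show "pr (pr l k) (iv k) = l" "pr l k \<in> {g'\<in>G. d g' = d k}"
      using mult_right_div mult k by auto
  qed
  also have "\<dots> = (\<Sum>l\<in>{l\<in>G. d l = r k}. gc l (y k))"
    by (rule sum.cong[OF refl]) (use one_left gc_in in auto)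
  also have "\<dots> = y k" using supported_expand[OF y] by simp
  finally show ?thesis .
qed

lemma Bmul_Bunit_right:
  "Bmul x (Bunit f) k = (if k \<in> G \<and> d k = f then x k * one (r k) else 0)"
proof (cases "k \<in> G \<and> d k = f")
  case True
  have summand: "x g' * gc (pr g' (iv k)) (one (r k)) = (if g' = k then x k * one (r k) else 0)"
    if "g' \<in> G" "d g' = d k" for g'
  proof -
    have "pr g' (iv k) = r k \<longleftrightarrow> g' = k"
      using right_div[OF that(1) _ that(2)] True unit_l r_eq by auto
    then show ?thesis using gc_homog[OF r_in one_in[OF r_in]] True by auto
  qed
  have "Bmul x (Bunit f) k = (\<Sum>g'\<in>{g'\<in>G. d g' = d k}. x g' * gc (pr g' (iv k)) (one (r k)))"
    unfolding Bmul_apply Bunit_def using True by simp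
  also have "\<dots> = (\<Sum>g'\<in>{g'\<in>G. d g' = d k}. if g' = k then x k * one (r k) else 0)"
    using summand by (intro sum.cong) auto
  also have "\<dots> = x k * one (r k)" using True finite_G by simp
  finally show ?thesis using True by simp
qed (auto simp: Bmul_apply Bunit_def)

lemma beta_C0: assumes c: "c \<in> C0" and m: "m \<in> G" shows "bt (r m) (c m) = c m"
proof (intro ext)
  fix k
  show "bt (r m) (c m) k = c m k"
  proof (cases "k \<in> G \<and> d k = r m")
    case True
    then show ?thesis using unit_r unfolding beta_def r_r[OF m] by metis
  next
    case False
    then show ?thesis
      using C0_nonzero[OF c, of m k] unfolding beta_def r_r[OF m] by (cases "c m k = 0") auto
  qed
qed

lemma beta_Bunit: "m \<in> G \<Longrightarrow> bt m (Bunit (d m)) = Bunit (r m)"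
  unfolding beta_def Bunit_def using mult by (auto simp: fun_eq_iff)

text \<open>Only the pair (r m, m) contributes to the delta_m-coefficient of U S c.\<close>
lemma mul_U_left:
  assumes "S \<subseteq> E0"
  shows "mul (U S) c m k = (if m \<in> G \<and> r m \<in> S then Bmul (Bunit (r m)) (bt (r m) (c m)) k else 0)"
proof -
  have "Bmul (U S (fst p)) (bt (fst p) (c (snd p))) k = 0" if pP: "p \<in> Pairs m" and ne: "p \<noteq> (r m, m)" for p
  proof -
    obtain g h where p: "p = (g, h)" "g \<in> G" "h \<in> G" "d g = r h" "pr g h = m"
      using pP unfolding Pairs_def by blast
    have "g \<notin> S"
    proof
      assume "g \<in> S"
      then have "g = r h" using assms G0_iff p(4) by auto
      then have "h = m" using unit_l[OF p(3)] p(5) by simp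
      then show False using ne p(1) \<open>g = r h\<close> by simp
    qed
    then show ?thesis using p(1) by (simp add: U_def B_mult_def)
  qed
  then have "mul (U S) c m k = (if (r m, m) \<in> Pairs m then Bmul (U S (r m)) (bt (r m) (c m)) k else 0)"
    unfolding mul_apply by (subst sum_eq_single[OF finite_Pairs, where a="(r m, m)"]) auto
  moreover have "(r m, m) \<in> Pairs m \<longleftrightarrow> m \<in> G"
    unfolding Pairs_def using r_in d_r unit_l by auto
  ultimately show ?thesis by (simp add: U_def B_mult_def)
qed

text \<open>Only the pair (m, d m) contributes to the delta_m-coefficient of c U S.\<close>
lemma mul_U_right:
  assumes "S \<subseteq> E0"
  shows "mul c (U S) m k = (if m \<in> G \<and> d m \<in> S then Bmul (c m) (Bunit (r m)) k else 0)"
proof -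
  have "Bmul (c (fst p)) (bt (fst p) (U S (snd p))) k = 0" if pP: "p \<in> Pairs m" and ne: "p \<noteq> (m, d m)" for p
  proof -
    obtain g h where p: "p = (g, h)" "g \<in> G" "h \<in> G" "d g = r h" "pr g h = m"
      using pP unfolding Pairs_def by blast
    have "h \<notin> S"
    proof
      assume "h \<in> S"
      then have "h = d g" using assms G0_iff G0_r p(4) by auto
      then have "g = m" using unit_r[OF p(2)] p(5) by simp
      then show False using ne p(1) \<open>h = d g\<close> by simp
    qed
    then show ?thesis using p(1) by (simp add: U_def B_mult_def beta_def)
  qed
  then have "mul c (U S) m k = (if (m, d m) \<in> Pairs m then Bmul (c m) (bt m (U S (d m))) k else 0)"
    unfolding mul_apply by (subst sum_eq_single[OF finite_Pairs, where a="(m, d m)"]) auto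
  moreover have "(m, d m) \<in> Pairs m \<longleftrightarrow> m \<in> G"
    unfolding Pairs_def using d_in r_d unit_r by auto
  ultimately show ?thesis
    using beta_Bunit by (auto simp: U_def B_mult_def beta_def)
qed

lemma U_mul: assumes S: "S \<subseteq> E0" and c: "c \<in> C0" shows "mul (U S) c = restr S c"
proof (intro ext)
  fix m k
  show "mul (U S) c m k = restr S c m k"
  proof (cases "c m k = 0")
    case True
    then show ?thesis
      using mul_U_left[OF S] beta_C0[OF c] Bmul_apply by (auto simp: restr_def Bunit_def)
  next
    case False
    note nz = C0_nonzero[OF c False]
    have "supported (\<lambda>l. d l = r k) (c m k)"
      using supported_mono[OF C0_supported[OF c]] unfolding isotropic_def by auto
    then have "Bmul (Bunit (d k)) (c m) k = c m k" using nz by (intro Bmul_Bunit_left) auto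
    then show ?thesis using mul_U_left[OF S] beta_C0[OF c] nz by (auto simp: restr_def)
  qed
qed

lemma mul_U: assumes S: "S \<subseteq> E0" and c: "c \<in> C0" shows "mul c (U S) = restr S c"
proof (intro ext)
  fix m k
  show "mul c (U S) m k = restr S c m k"
  proof (cases "c m k = 0")
    case True
    then show ?thesis using mul_U_right[OF S] Bmul_Bunit_right C0_nonzero[OF c]
      by (auto simp: restr_def)
  next
    case False
    note nz = C0_nonzero[OF c False]
    have "c m k * one (r k) = c m k"
      by (rule supported_one_right, rule supported_mono[OF C0_supported[OF c]])
        (auto simp: isotropic_def)
    then show ?thesis using mul_U_right[OF S] Bmul_Bunit_right nz by (auto simp: restr_def)
  qed
qed

end

section \<open>C_0 is closed under multiplication\<close>

context graded_setting begin

lemma mul_nonzero: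
  assumes "mul x y m k \<noteq> 0"
  obtains g h g' where "g \<in> G" "h \<in> G" "d g = r h" "pr g h = m" "x g g' \<noteq> 0"
    "k \<in> G" "d k = r g" "y h (pr k g) \<noteq> 0"
proof -
  obtain p where p: "p \<in> Pairs m" "Bmul (x (fst p)) (bt (fst p) (y (snd p))) k \<noteq> 0"
    using assms unfolding mul_apply by (meson sum.neutral)
  obtain g h where gh: "p = (g, h)" "g \<in> G" "h \<in> G" "d g = r h" "pr g h = m"
    using p(1) unfolding Pairs_def by blast
  have k: "k \<in> G" using p(2) unfolding Bmul_apply by (auto split: if_splits)
  obtain g' where g': "x g g' * gc (pr g' (iv k)) (bt g (y h) k) \<noteq> 0"
    using p(2) k gh(1) unfolding Bmul_apply by (auto intro: sum.neutral)
  then have "bt g (y h) k \<noteq> 0" by auto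
  then have "d k = r g" "y h (pr k g) \<noteq> 0" unfolding beta_def by (auto split: if_splits)
  moreover have "x g g' \<noteq> 0" using g' by auto
  ultimately show thesis using that gh(2-5) k by blast
qed

lemma mul_summand_supported:
  assumes x: "x \<in> C0" and y: "y \<in> C0" and k: "k \<in> G" and g': "g' \<in> G" "d g' = d k"
  shows "supported (isotropic (r k)) (x g g' * gc (pr g' (iv k)) (bt g (y h) k))"
proof (cases "x g g' = 0 \<or> gc (pr g' (iv k)) (bt g (y h) k) = 0")
  case False
  define l0 where "l0 = pr g' (iv k)"
  define b where "b = bt g (y h) k"
  have nz: "x g g' \<noteq> 0" "gc l0 b \<noteq> 0" using False l0_def b_def by auto
  then have "b \<noteq> 0" by auto
  then have dk: "d k = r g" and b_eq: "b = y h (pr k g)"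
    unfolding b_def beta_def by (auto split: if_splits)
  have "r (pr k g) = r k" using mult[OF k _ dk] C0_nonzero[OF x nz(1)] by blast
  then have "supported (isotropic (r k)) b" using C0_supported[OF y, of "pr k g" h] b_eq by simp
  then have b_supp: "supported (isotropic (r k)) (gc l0 b)" by (rule supported_gc)
  have l0: "l0 \<in> G" "r l0 = r g'" using right_div[OF g'(1) k g'(2)] l0_def by auto
  have "gc l0 (gc l0 b) = gc l0 b" using gc_homog[OF l0(1) gc_in[OF l0(1)]] by simp
  then have "isotropic (r k) l0" using b_supp nz(2) l0(1) unfolding supported_def by auto
  then have "supported (isotropic (r k)) (x g g')"
    using C0_supported[OF x, of g' g] l0(2) unfolding isotropic_def by simp
  then show ?thesis using supported_mult_isotropic b_supp l0_def b_def by simp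
qed auto

lemma mul_C0: assumes x: "x \<in> C0" and y: "y \<in> C0" shows "mul x y \<in> C0"
proof -
  have "m \<in> G \<and> d m = r m \<and> k \<in> G \<and> d k = d m" if nz: "mul x y m k \<noteq> 0" for m k
  proof -
    obtain g h g' where gh: "g \<in> G" "h \<in> G" "d g = r h" "pr g h = m" "x g g' \<noteq> 0"
      "k \<in> G" "d k = r g" "y h (pr k g) \<noteq> 0" using mul_nonzero[OF nz] .
    have "d g = r g" "d h = r h" using C0_nonzero[OF x gh(5)] C0_nonzero[OF y gh(8)] by auto
    then show ?thesis using mult[OF gh(1-3)] gh by auto
  qed
  moreover have "supported (isotropic (r k)) (mul x y m k)" for m k
    unfolding mul_apply Bmul_apply using mul_summand_supported[OF x y]
    by (auto intro!: supported_sum)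
  ultimately show ?thesis unfolding C0_iff by blast
qed

end

section \<open>The ideals C_e\<close>

context graded_setting begin

abbreviation "Cex \<equiv> Ce_explicit G pr iv Ag"

lemma C0_Cset: "C0 \<subseteq> Cset G pr iv"
  unfolding Cset_def using C0_nonzero by fastforce

lemma zero_C0: "0 \<in> C0"
  unfolding C0_iff by simp

lemma add_C0: "x \<in> C0 \<Longrightarrow> y \<in> C0 \<Longrightarrow> x + y \<in> C0"
  unfolding C0_iff by (auto intro: supported_add) (metis add.right_neutral)+

lemma neg_C0: "x \<in> C0 \<Longrightarrow> - x \<in> C0"
  unfolding C0_iff by (auto intro: supported_neg)

lemma scale_C0: "x \<in> C0 \<Longrightarrow> C_scale scale t x \<in> C0"
  unfolding C0_iff C_scale_def using module.scale_zero_right[OF module]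
  by (auto intro: supported_scale) metis+

lemma Cex_iff: "c \<in> Cex e \<longleftrightarrow> c \<in> C0 \<and> (\<forall>g k. c g k \<noteq> 0 \<longrightarrow> d g = e)"
  unfolding Ce_explicit_def C0set_def by auto

text \<open>C_0 w_e = restr {e} C_0, which is the explicitly described C_e.\<close>
lemma Ce_eq: assumes e: "e \<in> E0" shows "Ce G pr iv Ag e = Cex e"
proof -
  have "Ce G pr iv Ag e = restr {e} ` C0"
    unfolding Ce_def we_eq using mul_U[of "{e}"] e by (intro image_cong) auto
  also have "\<dots> = Cex e"
  proof
    show "restr {e} ` C0 \<subseteq> Cex e"
    proof (rule image_subsetI)
      fix c assume "c \<in> C0"
      then have "restr {e} c \<in> C0" by (rule restr_C0)
      moreover have "\<forall>g k. restr {e} c g k \<noteq> 0 \<longrightarrow> d g = e" by (simp add: restr_def)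
      ultimately show "restr {e} c \<in> Cex e" by (simp add: Cex_iff)
    qed
    show "Cex e \<subseteq> restr {e} ` C0"
    proof
      fix c assume "c \<in> Cex e"
      then have "c \<in> C0" "restr {e} c = c" unfolding Cex_iff restr_def by (auto simp: fun_eq_iff)
      then show "c \<in> restr {e} ` C0" by (metis image_eqI)
    qed
  qed
  finally show ?thesis .
qed

lemma mul_Cex: assumes x: "x \<in> C0" and y: "y \<in> Cex e"
  shows "mul x y \<in> Cex e" and "mul y x \<in> Cex e"
proof -
  have yC: "y \<in> C0" and ye: "\<And>g k. y g k \<noteq> 0 \<Longrightarrow> d g = e" using y Cex_iff by auto
  have "d m = e" if nz: "mul x y m k \<noteq> 0" for m k
  proof -
    obtain g h g' where gh: "g \<in> G" "h \<in> G" "d g = r h" "pr g h = m" "y h (pr k g) \<noteq> 0"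
      using mul_nonzero[OF nz] by metis
    then show ?thesis using mult[OF gh(1-3)] ye by metis
  qed
  then show "mul x y \<in> Cex e" unfolding Cex_iff using mul_C0 x yC by blast
  have "d m = e" if nz: "mul y x m k \<noteq> 0" for m k
  proof -
    obtain g h g' where gh: "g \<in> G" "h \<in> G" "d g = r h" "pr g h = m" "y g g' \<noteq> 0"
      "x h (pr k g) \<noteq> 0" using mul_nonzero[OF nz] by metis
    have "d h = r h" using C0_nonzero[OF x gh(6)] by blast
    then show ?thesis using mult[OF gh(1-3)] ye[OF gh(5)] gh by metis
  qed
  then show "mul y x \<in> Cex e" unfolding Cex_iff using mul_C0 x yC by blast
qed

lemma Ce_ideal:
  assumes e: "e \<in> E0"
  shows "Ce G pr iv Ag e = Cex e \<and> Ce G pr iv Ag e \<subseteq> C0 \<and> 0 \<in> Ce G pr iv Ag e \<and>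
    (\<forall>x\<in>Ce G pr iv Ag e. \<forall>y\<in>Ce G pr iv Ag e. x + y \<in> Ce G pr iv Ag e) \<and>
    (\<forall>t. \<forall>x\<in>Ce G pr iv Ag e. C_scale scale t x \<in> Ce G pr iv Ag e) \<and>
    (\<forall>x\<in>C0. \<forall>y\<in>Ce G pr iv Ag e. mul x y \<in> Ce G pr iv Ag e \<and> mul y x \<in> Ce G pr iv Ag e) \<and>
    (\<forall>y\<in>Ce G pr iv Ag e. mul (we e) y = y \<and> mul y (we e) = y)"
proof -
  have add: "x + y \<in> Cex e" if x: "x \<in> Cex e" and y: "y \<in> Cex e" for x y
  proof -
    have "x g k \<noteq> 0 \<or> y g k \<noteq> 0" if "(x + y) g k \<noteq> 0" for g k using that by auto
    then show ?thesis using x y add_C0 unfolding Cex_iff by blast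
  qed
  have scale: "C_scale scale t x \<in> Cex e" if x: "x \<in> Cex e" for t x
  proof -
    have "x g k \<noteq> 0" if "C_scale scale t x g k \<noteq> 0" for g k
      using that module.scale_zero_right[OF module] unfolding C_scale_def by auto
    then show ?thesis using x scale_C0 unfolding Cex_iff by blast
  qed
  have unit: "mul (we e) y = y \<and> mul y (we e) = y" if "y \<in> Cex e" for y
  proof -
    have "y \<in> C0" "restr {e} y = y" using that unfolding Cex_iff restr_def by (auto simp: fun_eq_iff)
    then show ?thesis unfolding we_eq using U_mul[of "{e}" y] mul_U[of "{e}" y] e by simp
  qed
  have "Cex e \<subseteq> C0" "0 \<in> Cex e" using Cex_iff zero_C0 by auto
  moreover have "\<forall>x\<in>Cex e. \<forall>y\<in>Cex e. x + y \<in> Cex e" using add by blast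
  moreover have "\<forall>t. \<forall>x\<in>Cex e. C_scale scale t x \<in> Cex e" using scale by blast
  moreover have "\<forall>x\<in>C0. \<forall>y\<in>Cex e. mul x y \<in> Cex e \<and> mul y x \<in> Cex e" using mul_Cex by blast
  moreover have "\<forall>y\<in>Cex e. mul (we e) y = y \<and> mul y (we e) = y" using unit by blast
  ultimately show ?thesis unfolding Ce_eq[OF e] by (intro conjI refl)
qed

text \<open>The sum of the C_e is direct: the summands have disjoint supports.\<close>
lemma Ce_independent:
  assumes f: "\<forall>e\<in>E0. f e \<in> Ce G pr iv Ag e" and sum0: "(\<Sum>e\<in>E0. f e) = 0" and e: "e \<in> E0"
  shows "f e = 0"
proof (rule ccontr)
  assume "f e \<noteq> 0"
  then obtain g k where nz: "f e g k \<noteq> 0" by (auto simp: fun_eq_iff)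
  have supp: "\<And>e' g k. e' \<in> E0 \<Longrightarrow> f e' g k \<noteq> 0 \<Longrightarrow> d g = e'"
    using f Ce_eq Cex_iff by blast
  have "0 = (\<Sum>e'\<in>E0. f e') g k" using sum0 by simp
  also have "\<dots> = (\<Sum>e'\<in>E0. f e' g k)" by (simp add: sum_fun_apply)
  also have "\<dots> = f e g k + (\<Sum>e'\<in>E0 - {e}. f e' g k)" using sum.remove[OF finite_E0 e] by blast
  also have "(\<Sum>e'\<in>E0 - {e}. f e' g k) = 0"
    using supp[OF e nz] supp by (intro sum.neutral) force
  finally show False using nz by simp
qed

end

context graded_setting begin

lemma C0_subalgebra:
  "C0 \<subseteq> Cset G pr iv \<and> 0 \<in> C0 \<and> (\<forall>x\<in>C0. \<forall>y\<in>C0. x + y \<in> C0 \<and> mul x y \<in> C0) \<and>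
   (\<forall>x\<in>C0. - x \<in> C0) \<and> (\<forall>t. \<forall>x\<in>C0. C_scale scale t x \<in> C0) \<and>
   w_tot G pr iv Ag \<in> C0 \<and> (\<forall>x\<in>C0. mul (w_tot G pr iv Ag) x = x \<and> mul x (w_tot G pr iv Ag) = x)"
  unfolding w_eq using C0_Cset zero_C0 add_C0 mul_C0 neg_C0 scale_C0 U_C0[of E0]
    U_mul[of E0] mul_U[of E0] restr_E0 by simp

lemma we_central_idempotents:
  "(\<forall>e\<in>E0. we e \<in> C0 \<and> mul (we e) (we e) = we e \<and> (\<forall>x\<in>C0. mul (we e) x = mul x (we e))) \<and>
   (\<forall>e\<in>E0. \<forall>e'\<in>E0. e \<noteq> e' \<longrightarrow> mul (we e) (we e') = 0) \<and>
   (\<Sum>e\<in>E0. we e) = w_tot G pr iv Ag"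
proof (intro conjI ballI impI)
  fix e assume e: "e \<in> E0"
  then have we_C0: "we e \<in> C0" unfolding we_eq by (simp add: U_C0)
  then show "we e \<in> C0" .
  show "mul (we e) (we e) = we e"
    using U_mul[of "{e}", OF _ we_C0] e restr_U[of "{e}" "{e}"] unfolding we_eq by simp
  show "mul (we e) x = mul x (we e)" if "x \<in> C0" for x
    using U_mul[of "{e}" x] mul_U[of "{e}" x] e that unfolding we_eq by simp
  fix e' assume e': "e' \<in> E0" "e \<noteq> e'"
  then show "mul (we e) (we e') = 0"
    using U_mul[of "{e}" "U {e'}"] U_C0[of "{e'}"] e restr_U[of "{e'}" "{e}"] U_empty
    unfolding we_eq by simp
qed (simp add: w_tot_def)

lemma C0_decomposition:
  "(\<forall>e\<in>E0. Ce G pr iv Ag e = Cex e \<and> Ce G pr iv Ag e \<subseteq> C0 \<and> 0 \<in> Ce G pr iv Ag e \<and>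
      (\<forall>x\<in>Ce G pr iv Ag e. \<forall>y\<in>Ce G pr iv Ag e. x + y \<in> Ce G pr iv Ag e) \<and>
      (\<forall>t. \<forall>x\<in>Ce G pr iv Ag e. C_scale scale t x \<in> Ce G pr iv Ag e) \<and>
      (\<forall>x\<in>C0. \<forall>y\<in>Ce G pr iv Ag e. mul x y \<in> Ce G pr iv Ag e \<and> mul y x \<in> Ce G pr iv Ag e) \<and>
      (\<forall>y\<in>Ce G pr iv Ag e. mul (we e) y = y \<and> mul y (we e) = y)) \<and>
   (\<forall>x\<in>C0. x = (\<Sum>e\<in>E0. mul x (we e))) \<and>
   (\<forall>f. (\<forall>e\<in>E0. f e \<in> Ce G pr iv Ag e) \<and> (\<Sum>e\<in>E0. f e) = 0 \<longrightarrow> (\<forall>e\<in>E0. f e = 0))"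
proof (intro conjI ballI allI impI)
  show "x = (\<Sum>e\<in>E0. mul x (we e))" if "x \<in> C0" for x
    using sum_restr[OF that] mul_U[OF _ that] unfolding we_eq by simp
qed (use Ce_ideal Ce_independent in blast)+

end

theorem lemma4p1:
  fixes G :: "'g set" and pr :: "'g \<Rightarrow> 'g \<Rightarrow> 'g" and iv :: "'g \<Rightarrow> 'g"
    and Ag :: "'g \<Rightarrow> 'a::ring_1 set" and scale :: "'k::comm_ring_1 \<Rightarrow> 'a \<Rightarrow> 'a"
  assumes "finite G" and "groupoid G pr iv"
    and "K_algebra scale" and "graded_algebra scale G pr iv Ag"
  defines "C0 \<equiv> C0set G pr iv Ag" and "mul \<equiv> C_mult G pr iv Ag"
    and "w \<equiv> w_tot G pr iv Ag" and "we \<equiv> w_e G pr iv Ag"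
    and "E0 \<equiv> G0 G pr iv"
  shows
    \<comment> \<open>(i) C_0 is a unital K-subalgebra of C with identity w\<close>
    "(C0 \<subseteq> Cset G pr iv \<and> 0 \<in> C0 \<and>
      (\<forall>x\<in>C0. \<forall>y\<in>C0. x + y \<in> C0 \<and> mul x y \<in> C0) \<and>
      (\<forall>x\<in>C0. - x \<in> C0) \<and>
      (\<forall>t. \<forall>x\<in>C0. C_scale scale t x \<in> C0) \<and>
      w \<in> C0 \<and> (\<forall>x\<in>C0. mul w x = x \<and> mul x w = x))
   \<and> \<comment> \<open>(ii) the w_e are central orthogonal idempotents of C_0 summing to w\<close>
     ((\<forall>e\<in>E0. we e \<in> C0 \<and> mul (we e) (we e) = we e \<and>
         (\<forall>x\<in>C0. mul (we e) x = mul x (we e))) \<and>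
      (\<forall>e\<in>E0. \<forall>e'\<in>E0. e \<noteq> e' \<longrightarrow> mul (we e) (we e') = 0) \<and>
      (\<Sum>e\<in>E0. we e) = w)
   \<and> \<comment> \<open>(iii) C_0 is the direct sum of the ideals C_e = C_0 w_e, unital with identity w_e\<close>
     ((\<forall>e\<in>E0. Ce G pr iv Ag e = Ce_explicit G pr iv Ag e \<and>
         Ce G pr iv Ag e \<subseteq> C0 \<and>
         0 \<in> Ce G pr iv Ag e \<and>
         (\<forall>x\<in>Ce G pr iv Ag e. \<forall>y\<in>Ce G pr iv Ag e. x + y \<in> Ce G pr iv Ag e) \<and>
         (\<forall>t. \<forall>x\<in>Ce G pr iv Ag e. C_scale scale t x \<in> Ce G pr iv Ag e) \<and>
         (\<forall>x\<in>C0. \<forall>y\<in>Ce G pr iv Ag e. mul x y \<in> Ce G pr iv Ag e \<and> mul y x \<in> Ce G pr iv Ag e) \<and>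
         (\<forall>y\<in>Ce G pr iv Ag e. mul (we e) y = y \<and> mul y (we e) = y)) \<and>
      (\<forall>x\<in>C0. x = (\<Sum>e\<in>E0. mul x (we e))) \<and>
      (\<forall>f. (\<forall>e\<in>E0. f e \<in> Ce G pr iv Ag e) \<and> (\<Sum>e\<in>E0. f e) = 0 \<longrightarrow> (\<forall>e\<in>E0. f e = 0)))"
proof -
  interpret graded_setting G pr iv Ag scale
    using assms(1-4) by unfold_locales
  show ?thesis
    unfolding assms(5-9)
    by (intro conjI[OF C0_subalgebra conjI[OF we_central_idempotents C0_decomposition]])
qed

end
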